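(* Let $\ell:\mathcal{Y}\times\mathcal{Y}\to\mathbb{R}_{\ge0}$ be a loss with $\ell(y,y)=0$ for all $y$, and let $\epsilon_+\ge 0$. Then there exist a feature space $\mathcal{X}=\mathcal{X}_D\times\mathcal{X}_A\times\mathcal{X}_P$, a finite label set $\mathcal{Y}$, a probability distribution $p$ on $\mathcal{X}$, a class $\mathcal{E}$ of explanations, a black box $B:\mathcal{X}\to\mathcal{Y}$ and an explanation $E\in\mathcal{E}$ such that (i) $E$ has perfect fidelity, i.e. $L(E,B)=0$, and (ii) $E$ is potentially misleading for $B$, i.e. $\hat{\mathcal{O}}(E)\neq\hat{\mathcal{O}}^*(B)$.
   Context: Setting: the input space decomposes as $\mathcal{X}=\mathcal{X}_D\times\mathcal{X}_A\times\mathcal{X}_P$, where $\mathcal{X}_D$ is the product of the coordinates of the "desired features" $D$, $\mathcal{X}_A$ of the "ambivalent features" $A$, and $\mathcal{X}_P$ of the "prohibited features" $P$. A black box is a (measurable) function $B:\mathcal{X}\to\mathcal{Y}$; an explanation is an element of a class $\mathcal{E}$ of (measurable) functions $\mathcal{X}\to\mathcal{Y}$. For a data distribution $p$ on $\mathcal{X}$ and loss $\ell$, the relative error is $L(F,F')=\mathbb{E}_{x\sim p}[\ell(F(x),F'(x))]$, and the fidelity of $E$ is $1-L(E,B)$. A function $f:\mathcal{X}\to\mathcal{Y}$ depends on a feature coordinate $j$ if there are $x,x'\in\mathcal{X}$ differing only in coordinate $j$ with $f(x)\neq f(x')$. A function (black box or explanation) is acceptable if it depends on every desired feature and on no prohibited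 feature; $\mathcal{E}_+\subseteq\mathcal{E}$ denotes the acceptable explanations and $\mathcal{B}_+$ the acceptable black boxes. With fidelity threshold $\epsilon_+\ge0$, define $\hat{\mathcal{O}}(E)=\mathbb{I}[E\in\mathcal{E}_+\wedge L(E,B)\le\epsilon_+]$ and $\hat{\mathcal{O}}^*(B)=\mathbb{I}[B\in\mathcal{B}_+]$. An explanation $E$ of $B$ is potentially misleading if $\hat{\mathcal{O}}(E)\neq\hat{\mathcal{O}}^*(B)$. *)

theory Defs
  imports "HOL-Probability.Probability"
begin

text \<open>Inputs are extensional functions on a finite set F of feature coordinates
  (indices in nat, values in real); the input space is the product
  X = PiE F S, where F is partitioned into desired D, ambivalent A and
  prohibited P features, so X is (isomorphic to) X_D x X_A x X_P.\<close>

definition depends_on :: "(nat \<Rightarrow> real) set \<Rightarrow> ((nat \<Rightarrow> real) \<Rightarrow> 'y) \<Rightarrow> nat \<Rightarrow> bool" where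
  "depends_on X f j \<longleftrightarrow>
     (\<exists>x\<in>X. \<exists>x'\<in>X. (\<forall>i. i \<noteq> j \<longrightarrow> x i = x' i) \<and> f x \<noteq> f x')"

definition acceptable ::
  "(nat \<Rightarrow> real) set \<Rightarrow> nat set \<Rightarrow> nat set \<Rightarrow> ((nat \<Rightarrow> real) \<Rightarrow> 'y) \<Rightarrow> bool" where
  "acceptable X D P f \<longleftrightarrow> (\<forall>j\<in>D. depends_on X f j) \<and> (\<forall>j\<in>P. \<not> depends_on X f j)"

definition rel_err ::
  "(nat \<Rightarrow> real) pmf \<Rightarrow> ('y \<Rightarrow> 'y \<Rightarrow> real) \<Rightarrow> ((nat \<Rightarrow> real) \<Rightarrow> 'y) \<Rightarrow> ((nat \<Rightarrow> real) \<Rightarrow> 'y) \<Rightarrow> real" where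
  "rel_err p loss F F' = measure_pmf.expectation p (\<lambda>x. loss (F x) (F' x))"

definition O_hat ::
  "(nat \<Rightarrow> real) set \<Rightarrow> nat set \<Rightarrow> nat set \<Rightarrow> (nat \<Rightarrow> real) pmf \<Rightarrow> ('y \<Rightarrow> 'y \<Rightarrow> real) \<Rightarrow> real
   \<Rightarrow> ((nat \<Rightarrow> real) \<Rightarrow> 'y) set \<Rightarrow> ((nat \<Rightarrow> real) \<Rightarrow> 'y) \<Rightarrow> ((nat \<Rightarrow> real) \<Rightarrow> 'y) \<Rightarrow> bool" where
  "O_hat X D P p loss eps Ecls B E \<longleftrightarrow>
     (E \<in> Ecls \<and> acceptable X D P E) \<and> rel_err p loss E B \<le> eps"

definition O_star ::
  "(nat \<Rightarrow> real) set \<Rightarrow> nat set \<Rightarrow> nat set \<Rightarrow> ((nat \<Rightarrow> real) \<Rightarrow> 'y) \<Rightarrow> bool" where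
  "O_star X D P B \<longleftrightarrow> acceptable X D P B"

definition potentially_misleading ::
  "(nat \<Rightarrow> real) set \<Rightarrow> nat set \<Rightarrow> nat set \<Rightarrow> (nat \<Rightarrow> real) pmf \<Rightarrow> ('y \<Rightarrow> 'y \<Rightarrow> real) \<Rightarrow> real
   \<Rightarrow> ((nat \<Rightarrow> real) \<Rightarrow> 'y) set \<Rightarrow> ((nat \<Rightarrow> real) \<Rightarrow> 'y) \<Rightarrow> ((nat \<Rightarrow> real) \<Rightarrow> 'y) \<Rightarrow> bool" where
  "potentially_misleading X D P p loss eps Ecls B E \<longleftrightarrow>
     O_hat X D P p loss eps Ecls B E \<noteq> O_star X D P B"

end

theory Submission
  imports Defs
begin

text \<open>Fidelity is measured only on the support of the data distribution, whereas acceptability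
  is a property of the whole input space. A black box that depends on a prohibited feature but
  is constant on the support is therefore explained with perfect fidelity by that constant,
  which is acceptable as soon as no feature is desired; such an explanation certifies an
  unacceptable black box.\<close>

lemma not_depends_on_const: "\<not> depends_on X (\<lambda>_. c) j"
  by (simp add: depends_on_def)

lemma acceptable_const_iff: "acceptable X D P (\<lambda>_. c) \<longleftrightarrow> D = {}"
  by (auto simp: acceptable_def not_depends_on_const)

lemma depends_on_coordinate:
  assumes "j \<in> F" and "\<forall>i\<in>F. S i \<noteq> {}" and "a \<in> S j" and "b \<in> S j" and "g a \<noteq> g b"
  shows "depends_on (\<Pi>\<^sub>E i\<in>F. S i) (\<lambda>x. g (x j)) j"
proof -
  obtain x where x: "x \<in> (\<Pi>\<^sub>E i\<in>F. S i)"
    using assms(2) by (metis PiE_eq_empty_iff ex_in_conv)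
  have "x(j := a) \<in> (\<Pi>\<^sub>E i\<in>F. S i)" and "x(j := b) \<in> (\<Pi>\<^sub>E i\<in>F. S i)"
    using x assms(1,3,4) by (auto simp: PiE_iff extensional_def)
  then show ?thesis
    unfolding depends_on_def using assms(5)
    by (intro bexI[of _ "x(j := a)"] bexI[of _ "x(j := b)"]) auto
qed

lemma rel_err_eq_0_if_agree_on_support:
  assumes "\<forall>y. loss y y = 0" and "\<And>x. x \<in> set_pmf p \<Longrightarrow> F x = F' x"
  shows "rel_err p loss F F' = 0"
proof -
  have "measure_pmf.expectation p (\<lambda>x. loss (F x) (F' x)) = measure_pmf.expectation p (\<lambda>_. 0)"
    using assms by (intro integral_cong_AE) (auto simp: AE_measure_pmf_iff)
  then show ?thesis
    by (simp add: rel_err_def)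
qed

lemma potentially_misleading_if_faithful_acceptable:
  assumes "E \<in> Ecls" and "acceptable X D P E" and "rel_err p loss E B \<le> eps"
    and "\<not> acceptable X D P B"
  shows "potentially_misleading X D P p loss eps Ecls B E"
  using assms by (simp add: potentially_misleading_def O_hat_def O_star_def)

theorem theorem1:
  fixes loss :: "nat \<Rightarrow> nat \<Rightarrow> real" and eps :: real
  assumes "\<forall>y y'. loss y y' \<ge> 0"
    and "\<forall>y. loss y y = 0"
    and "eps \<ge> 0"
  shows "\<exists>(F::nat set) (D::nat set) (A::nat set) (P::nat set) (S::nat \<Rightarrow> real set) (Y::nat set)
            (p::(nat \<Rightarrow> real) pmf) (Ecls::((nat \<Rightarrow> real) \<Rightarrow> nat) set)
            (B::(nat \<Rightarrow> real) \<Rightarrow> nat) (E::(nat \<Rightarrow> real) \<Rightarrow> nat).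
           finite F \<and> F = D \<union> A \<union> P \<and> D \<inter> A = {} \<and> D \<inter> P = {} \<and> A \<inter> P = {} \<and>
           finite Y \<and>
           set_pmf p \<subseteq> (\<Pi>\<^sub>E j\<in>F. S j) \<and>
           Ecls \<subseteq> ((\<Pi>\<^sub>E j\<in>F. S j) \<rightarrow> Y) \<and>
           B \<in> ((\<Pi>\<^sub>E j\<in>F. S j) \<rightarrow> Y) \<and>
           E \<in> Ecls \<and>
           rel_err p loss E B = 0 \<and>
           potentially_misleading (\<Pi>\<^sub>E j\<in>F. S j) D P p loss eps Ecls B E"
proof -
  define S :: "nat \<Rightarrow> real set" where "S = (\<lambda>_. {0, 1})"
  define X where "X = (\<Pi>\<^sub>E j\<in>{0}. S j)"
  define x0 :: "nat \<Rightarrow> real" where "x0 = restrict (\<lambda>_. 0) {0}"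
  define B :: "(nat \<Rightarrow> real) \<Rightarrow> nat" where "B = (\<lambda>x. if x 0 = 0 then 0 else 1)"
  define E :: "(nat \<Rightarrow> real) \<Rightarrow> nat" where "E = (\<lambda>_. 0)"
  have x0: "x0 \<in> X"
    by (simp add: X_def S_def x0_def)
  have fidelity: "rel_err (return_pmf x0) loss E B = 0"
    using assms(2) by (intro rel_err_eq_0_if_agree_on_support) (simp_all add: E_def B_def x0_def)
  have "depends_on X B 0"
    unfolding X_def B_def S_def by (rule depends_on_coordinate[where a = 0 and b = 1]) auto
  then have "\<not> acceptable X {} {0} B"
    by (simp add: acceptable_def)
  then have misleading: "potentially_misleading X {} {0} (return_pmf x0) loss eps {E} B E"
    using fidelity assms(3)
    by (intro potentially_misleading_if_faithful_acceptable) (simp_all add: E_def acceptable_const_iff)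
  have black_box: "B \<in> X \<rightarrow> {0, 1}" and explanations: "{E} \<subseteq> X \<rightarrow> {0, 1}"
    by (auto simp: B_def E_def)
  show ?thesis
    by (rule exI[of _ "{0}"], rule exI[of _ "{}"], rule exI[of _ "{}"], rule exI[of _ "{0}"],
        rule exI[of _ S], rule exI[of _ "{0, 1}"], rule exI[of _ "return_pmf x0"],
        rule exI[of _ "{E}"], rule exI[of _ B], rule exI[of _ E])
      (use x0 black_box explanations fidelity misleading in \<open>simp add: X_def[symmetric]\<close>)
qed

end
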